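(* Let $R$ be a commutative unital ring which is Noetherian and quasi-Euclidean, and let $M$ be a finitely generated $R$-module whose minimal number of generators is $\mathrm{rk}_R(M)$. Then for every integer $n > \mathrm{rk}_R(M)$, the action of $\mathrm{E}_n(R)$ on $\mathrm{Um}_n(M)$ by matrix right-multiplication is transitive.
   Context: A ring $R$ is quasi-Euclidean if for every $n \ge 2$ and every $\mathbf{r} = (r_1,\dots,r_n) \in R^n$ there exist $E \in \mathrm{E}_n(R)$ and $d \in R$ with $(d,0,\dots,0) = \mathbf{r}E$. $\mathrm{E}_n(R)$ is the subgroup of $\mathrm{GL}_n(R)$ generated by the elementary matrices (matrices differing from the identity in a single off-diagonal entry). $\mathrm{Um}_n(M)$ is the set of $\mathbf{m}=(m_1,\dots,m_n)\in M^n$ whose components generate $M$, and a matrix $A$ acts by $(\mathbf{m}A)_j = \sum_i m_i A_{ij}$. *)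

theory Defs
  imports Complex_Main
begin

(* Square n x n matrices over R are represented as functions nat => nat => 'r,
   only the entries with indices < n being relevant; vectors as functions nat => _,
   only the components with index < n being relevant. *)

definition mat_mult :: "nat \<Rightarrow> (nat \<Rightarrow> nat \<Rightarrow> 'r::comm_ring_1) \<Rightarrow> (nat \<Rightarrow> nat \<Rightarrow> 'r) \<Rightarrow> (nat \<Rightarrow> nat \<Rightarrow> 'r)" where
  "mat_mult n A B = (\<lambda>i k. \<Sum>j<n. A i j * B j k)"

definition id_mat :: "nat \<Rightarrow> nat \<Rightarrow> 'r::comm_ring_1" where
  "id_mat = (\<lambda>i j. if i = j then 1 else 0)"

definition elem_mat :: "nat \<Rightarrow> nat \<Rightarrow> 'r::comm_ring_1 \<Rightarrow> nat \<Rightarrow> nat \<Rightarrow> 'r" where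
  "elem_mat p q a = (\<lambda>i j. if i = p \<and> j = q then a else id_mat i j)"

(* E_n(R): the subgroup of GL_n(R) generated by the elementary matrices.  Since the inverse
   of an elementary matrix elem_mat p q a is elem_mat p q (-a), the submonoid generated by
   the elementary matrices is already this subgroup. *)
inductive_set E_group :: "nat \<Rightarrow> (nat \<Rightarrow> nat \<Rightarrow> 'r::comm_ring_1) set" for n :: nat where
  E_id: "id_mat \<in> E_group n"
| E_step: "A \<in> E_group n \<Longrightarrow> p < n \<Longrightarrow> q < n \<Longrightarrow> p \<noteq> q
            \<Longrightarrow> mat_mult n A (elem_mat p q a) \<in> E_group n"

definition vec_mat_mult :: "nat \<Rightarrow> (nat \<Rightarrow> 'r::comm_ring_1) \<Rightarrow> (nat \<Rightarrow> nat \<Rightarrow> 'r) \<Rightarrow> nat \<Rightarrow> 'r" where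
  "vec_mat_mult n r A = (\<lambda>j. \<Sum>i<n. r i * A i j)"

definition quasi_euclidean :: "'r::comm_ring_1 itself \<Rightarrow> bool" where
  "quasi_euclidean _ \<longleftrightarrow>
     (\<forall>n \<ge> 2. \<forall>r :: nat \<Rightarrow> 'r. \<exists>E \<in> E_group n. \<exists>d.
        \<forall>j<n. vec_mat_mult n r E j = (if j = 0 then d else 0))"

definition noetherian_ring :: "'r::comm_ring_1 itself \<Rightarrow> bool" where
  "noetherian_ring _ \<longleftrightarrow>
     (\<forall>I :: 'r set. module.subspace ((*) :: 'r \<Rightarrow> 'r \<Rightarrow> 'r) I \<longrightarrow>
        (\<exists>S. finite S \<and> module.span ((*) :: 'r \<Rightarrow> 'r \<Rightarrow> 'r) S = I))"

definition fin_gen_module :: "('r::comm_ring_1 \<Rightarrow> 'm::ab_group_add \<Rightarrow> 'm) \<Rightarrow> bool" where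
  "fin_gen_module scale \<longleftrightarrow> (\<exists>S. finite S \<and> module.span scale S = UNIV)"

definition module_rank :: "('r::comm_ring_1 \<Rightarrow> 'm::ab_group_add \<Rightarrow> 'm) \<Rightarrow> nat" where
  "module_rank scale = (LEAST k. \<exists>S. finite S \<and> card S = k \<and> module.span scale S = UNIV)"

definition Um :: "('r::comm_ring_1 \<Rightarrow> 'm::ab_group_add \<Rightarrow> 'm) \<Rightarrow> nat \<Rightarrow> (nat \<Rightarrow> 'm) set" where
  "Um scale n = {m. module.span scale (m ` {..<n}) = UNIV}"

definition mod_vec_mat :: "('r::comm_ring_1 \<Rightarrow> 'm::ab_group_add \<Rightarrow> 'm) \<Rightarrow> nat \<Rightarrow> (nat \<Rightarrow> 'm) \<Rightarrow> (nat \<Rightarrow> nat \<Rightarrow> 'r) \<Rightarrow> nat \<Rightarrow> 'm" where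
  "mod_vec_mat scale n m A = (\<lambda>j. \<Sum>i<n. scale (A i j) (m i))"

end

theory Submission imports Defs begin

text \<open>Fix generators g_0, ..., g_(k-1) of M, where k = rk M < n. Every unimodular n-tuple is
  E_n-equivalent to the normal form (g_0, ..., g_(k-1), 0, ..., 0), whence transitivity. The
  normal form is reached modulo a submodule N, by induction on k: modulo N + R h with h = g_(k-1)
  the tuple is already (g_0, ..., g_(k-2), 0, ..., 0), so modulo N its entries are these plus
  multiples r_j h. The quasi-Euclidean property turns (r_(k-1), ..., r_(n-1)) into (d, 0, ..., 0);
  as k < n this leaves an entry lying in N, to which unimodularity lets us add a copy of h, and
  this copy clears all remaining coefficients.\<close>

lemma mat_mult_elem_mat:
  assumes "j < n" "p < n" "p \<noteq> q"
  shows "mat_mult n A (elem_mat p q a) i j = A i j + (if j = q then A i p * a else 0)"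
proof -
  have "mat_mult n A (elem_mat p q a) i j
      = (\<Sum>l<n. (if l = p \<and> j = q then A i p * a else 0) + (if l = j then A i j else 0))"
    unfolding mat_mult_def elem_mat_def id_mat_def
    by (rule sum.cong) (use assms in auto)
  also have "\<dots> = A i j + (if j = q then A i p * a else 0)"
    using assms by (simp add: sum.distrib)
  finally show ?thesis .
qed

text \<open>E_n-orbits as chains of elementary column operations (add a multiple of column p to
  column q), which makes symmetry and transitivity easy.\<close>

inductive elem_equiv :: "('a \<Rightarrow> 'b \<Rightarrow> 'b) \<Rightarrow> nat \<Rightarrow> (nat \<Rightarrow> 'b::ab_group_add) \<Rightarrow> (nat \<Rightarrow> 'b) \<Rightarrow> bool"
  for scale n where
  elem_equiv_eq: "(\<forall>j<n. y j = x j) \<Longrightarrow> elem_equiv scale n x y"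
| elem_equiv_step: "elem_equiv scale n x y \<Longrightarrow> p < n \<Longrightarrow> q < n \<Longrightarrow> p \<noteq> q \<Longrightarrow>
     (\<forall>j<n. z j = (if j = q then y q + scale a (y p) else y j)) \<Longrightarrow> elem_equiv scale n x z"

context module begin

lemma mod_vec_mat_elem_mat:
  assumes "j < n" "p < n" "p \<noteq> q"
  shows "mod_vec_mat scale n u (mat_mult n A (elem_mat p q a)) j =
     (if j = q then mod_vec_mat scale n u A q + a *s mod_vec_mat scale n u A p
      else mod_vec_mat scale n u A j)"
  using assms
  by (auto simp: mod_vec_mat_def mat_mult_elem_mat scale_left_distrib sum.distrib
      scale_sum_right mult.commute)

lemma mod_vec_mat_id_mat:
  assumes "j < n"
  shows "mod_vec_mat scale n u id_mat j = u j"
proof -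
  have "mod_vec_mat scale n u id_mat j = (\<Sum>i<n. if i = j then u i else 0)"
    unfolding mod_vec_mat_def id_mat_def by (rule sum.cong) auto
  then show ?thesis using assms by simp
qed

lemma elem_equiv_refl: "elem_equiv scale n x x"
  by (rule elem_equiv_eq) simp

lemma elem_equiv_cong_right:
  assumes "elem_equiv scale n x y" "\<forall>j<n. z j = y j"
  shows "elem_equiv scale n x z"
  using assms(1)
proof cases
  case elem_equiv_eq
  then show ?thesis using assms(2) by (intro elem_equiv.elem_equiv_eq) auto
next
  case (elem_equiv_step y' p q a)
  then show ?thesis using assms(2) by (intro elem_equiv.elem_equiv_step[of scale n x y' p q z a]) auto
qed

lemma elem_equiv_trans:
  assumes "elem_equiv scale n x y" "elem_equiv scale n y z"
  shows "elem_equiv scale n x z"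
  using assms(2,1)
proof induction
  case elem_equiv_eq
  then show ?case using elem_equiv_cong_right by blast
next
  case (elem_equiv_step y z' p q w a)
  then show ?case by (intro elem_equiv.elem_equiv_step[of scale n x z' p q w a]) auto
qed

lemma elem_equiv_sym:
  assumes "elem_equiv scale n x y"
  shows "elem_equiv scale n y x"
  using assms
proof induction
  case elem_equiv_eq
  then show ?case by (intro elem_equiv.elem_equiv_eq) auto
next
  case (elem_equiv_step x y p q z a)
  have "elem_equiv scale n z y"
    by (rule elem_equiv.elem_equiv_step[of scale n z z p q y "-a", OF elem_equiv_refl])
       (use elem_equiv_step in auto)
  then show ?case using elem_equiv_step elem_equiv_trans by blast
qed

lemma elem_equiv_in_span:
  assumes "elem_equiv scale n x y" "j < n"
  shows "y j \<in> span (x ` {..<n})"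
  using assms
proof (induction arbitrary: j)
  case elem_equiv_eq
  then show ?case by (metis imageI lessThan_iff span_base)
next
  case elem_equiv_step
  then show ?case by (auto intro!: span_add span_scale)
qed

lemma elem_equiv_preserves_spanning:
  assumes "elem_equiv scale n x y" "span (x ` {..<n} \<union> N) = UNIV"
  shows "span (y ` {..<n} \<union> N) = UNIV"
proof -
  have "x ` {..<n} \<subseteq> span (y ` {..<n})"
    using elem_equiv_in_span[OF elem_equiv_sym[OF assms(1)]] by auto
  then have "x ` {..<n} \<union> N \<subseteq> span (y ` {..<n} \<union> N)"
    using span_mono[of "y ` {..<n}" "y ` {..<n} \<union> N"] span_superset[of "y ` {..<n} \<union> N"]
    by blast
  then have "span (x ` {..<n} \<union> N) \<subseteq> span (y ` {..<n} \<union> N)"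
    by (rule span_minimal) simp
  with assms(2) show ?thesis by auto
qed

lemma elem_equiv_imp_E_group:
  assumes "elem_equiv scale n x y"
  shows "\<exists>E\<in>E_group n. \<forall>j<n. mod_vec_mat scale n x E j = y j"
  using assms
proof induction
  case elem_equiv_eq
  then show ?case
    by (intro bexI[of _ id_mat]) (auto simp: mod_vec_mat_id_mat intro: E_group.E_id)
next
  case (elem_equiv_step x y p q z a)
  then obtain E where E: "E \<in> E_group n" "\<forall>j<n. mod_vec_mat scale n x E j = y j" by blast
  show ?case
    by (intro bexI[of _ "mat_mult n E (elem_mat p q a)"])
       (use elem_equiv_step E in \<open>auto simp: mod_vec_mat_elem_mat intro: E_group.E_step\<close>)
qed

lemma E_group_block_elem_equiv:
  assumes "E \<in> E_group n'" "off + n' \<le> n"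
  shows "elem_equiv scale n x (\<lambda>j. if off \<le> j \<and> j < off + n'
           then mod_vec_mat scale n' (\<lambda>i. x (off + i)) E (j - off) else x j)"
  using assms
proof induction
  case E_id
  then show ?case by (intro elem_equiv_eq) (auto simp: mod_vec_mat_id_mat)
next
  case (E_step A p q a)
  show ?case
    by (rule elem_equiv_step[OF E_step.IH[OF E_step.prems], of "off + p" "off + q" _ a])
       (use E_step in \<open>auto simp: mod_vec_mat_elem_mat\<close>)
qed

lemma elem_equiv_add_combination:
  assumes "finite S" "S \<subseteq> {..<n} - {q}" "q < n"
  shows "elem_equiv scale n x (x(q := x q + (\<Sum>i\<in>S. c i *s x i)))"
  using assms
proof (induction S rule: finite_induct)
  case empty
  then show ?case by (simp add: elem_equiv_refl)
next
  case (insert i S)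
  define y where "y = x(q := x q + (\<Sum>i\<in>S. c i *s x i))"
  have "elem_equiv scale n x y"
    unfolding y_def by (rule insert.IH) (use insert.prems in auto)
  then show ?case
    by (rule elem_equiv_step[of _ _ _ _ i q _ "c i"]) (use insert in \<open>auto simp: y_def add_ac\<close>)
qed

lemma elem_equiv_add_multiples:
  assumes "finite S" "S \<subseteq> {..<n} - {q}" "q < n"
  shows "elem_equiv scale n x (\<lambda>j. if j \<in> S then x j + c j *s x q else x j)"
  using assms
proof (induction S rule: finite_induct)
  case empty
  then show ?case by (simp add: elem_equiv_refl)
next
  case (insert i S)
  have "elem_equiv scale n x (\<lambda>j. if j \<in> S then x j + c j *s x q else x j)"
    by (rule insert.IH) (use insert.prems in auto)
  then show ?case
    by (rule elem_equiv_step[of _ _ _ _ q i _ "c i"]) (use insert in auto)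
qed

lemma span_image_lessThan_sum:
  fixes m :: "nat \<Rightarrow> 'b"
  assumes "v \<in> span (m ` {..<n})"
  obtains c where "v = (\<Sum>i<n. c i *s m i)"
proof -
  have "\<exists>c. v = (\<Sum>i<n. c i *s m i)"
    using assms
  proof (induction rule: span_induct_alt)
    case base
    show ?case by (intro exI[of _ "\<lambda>_. 0"]) simp
  next
    case (step a u v)
    then obtain j c where j: "j < n" "u = m j" and v: "v = (\<Sum>i<n. c i *s m i)" by blast
    have "(\<Sum>i<n. (c i + (if i = j then a else 0)) *s m i) = v + (\<Sum>i<n. if i = j then a *s m i else 0)"
      by (simp add: v scale_left_distrib sum.distrib if_distrib[of "\<lambda>r. r *s _"] cong: if_cong)
    also have "\<dots> = a *s u + v" using j by (simp add: add.commute)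
    finally show ?case by metis
  qed
  then show thesis using that by blast
qed

lemma quasi_euclidean_clear_tail:
  assumes QE: "quasi_euclidean TYPE('a)" and N: "subspace N" and kn: "k + 2 \<le> n"
    and r: "\<And>j. k \<le> j \<Longrightarrow> j < n \<Longrightarrow> x j - r j *s h \<in> N"
  obtains y d where "elem_equiv scale n x y" "\<And>j. j < k \<Longrightarrow> y j = x j"
    "\<And>j. k \<le> j \<Longrightarrow> j < n \<Longrightarrow> y j - (if j = k then d else 0) *s h \<in> N"
proof -
  have "2 \<le> n - k" using kn by simp
  with QE obtain E d where E: "E \<in> E_group (n - k)"
    "\<forall>j<n-k. vec_mat_mult (n - k) (\<lambda>i. r (k + i)) E j = (if j = 0 then d else 0)"
    unfolding quasi_euclidean_def by blast
  define y where "y = (\<lambda>j. if k \<le> j \<and> j < k + (n - k)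
      then mod_vec_mat scale (n - k) (\<lambda>i. x (k + i)) E (j - k) else x j)"
  have "elem_equiv scale n x y"
    unfolding y_def by (rule E_group_block_elem_equiv[OF E(1)]) (use kn in simp)
  moreover have "y j = x j" if "j < k" for j
    using that by (simp add: y_def)
  moreover have "y j - (if j = k then d else 0) *s h \<in> N" if j: "k \<le> j" "j < n" for j
  proof -
    have y_j: "y j = (\<Sum>i<n-k. E i (j - k) *s x (k + i))"
      using j by (simp add: y_def mod_vec_mat_def)
    have coeff: "(\<Sum>i<n-k. r (k + i) * E i (j - k)) = (if j = k then d else 0)"
      using E(2)[rule_format, of "j - k"] j unfolding vec_mat_mult_def by auto
    have "(\<Sum>i<n-k. E i (j - k) *s (x (k + i) - r (k + i) *s h))
        = (\<Sum>i<n-k. E i (j - k) *s x (k + i)) - (\<Sum>i<n-k. r (k + i) * E i (j - k)) *s h"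
      by (simp add: scale_right_diff_distrib sum_subtractf scale_sum_left mult.commute)
    then have "y j - (if j = k then d else 0) *s h
        = (\<Sum>i<n-k. E i (j - k) *s (x (k + i) - r (k + i) *s h))"
      by (simp add: y_j coeff)
    also have "\<dots> \<in> N"
      by (intro subspace_sum[OF N] subspace_scale[OF N] r) auto
    finally show ?thesis .
  qed
  ultimately show thesis by (rule that)
qed

lemma elem_equiv_fill_slot:
  assumes N: "subspace N" and spans: "span (x ` {..<n} \<union> N) = UNIV"
    and w: "w < n" "x w \<in> N"
  obtains y where "elem_equiv scale n x y" "y w - v \<in> N" "\<And>j. j \<noteq> w \<Longrightarrow> y j = x j"
proof -
  have "v \<in> span (x ` {..<n} \<union> N)" using spans by simp
  then obtain u z where v: "v = u + z" "u \<in> span (x ` {..<n})" "z \<in> N"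
    unfolding span_Un using N by (auto simp: span_eq_iff[THEN iffD2])
  obtain c where u: "u = (\<Sum>i<n. c i *s x i)" using span_image_lessThan_sum[OF v(2)] .
  define y where "y = x(w := x w + (\<Sum>i\<in>{..<n}-{w}. c i *s x i))"
  have "elem_equiv scale n x y"
    unfolding y_def by (rule elem_equiv_add_combination) (use w in auto)
  moreover have "y w - v \<in> N"
  proof -
    have "u = c w *s x w + (\<Sum>i\<in>{..<n}-{w}. c i *s x i)"
      unfolding u by (rule sum.remove) (use w in auto)
    then have "y w - v = (x w - c w *s x w) - z" by (simp add: y_def v algebra_simps)
    then show ?thesis using w(2) v(3) N by (simp add: subspace_diff subspace_scale)
  qed
  moreover have "y j = x j" if "j \<noteq> w" for j using that by (simp add: y_def)
  ultimately show thesis by (rule that)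
qed

text \<open>The copy of g k in entry w removes the coefficients r j and turns d into 1; entry w is
  then cleared by entry k.\<close>

lemma elem_equiv_clear_by_pivot:
  assumes N: "subspace N" and w: "k < w" "w < n"
    and below: "\<And>j. j < k \<Longrightarrow> x j - g j - r j *s g k \<in> N"
    and at_k: "x k - d *s g k \<in> N"
    and at_w: "x w - g k \<in> N"
    and above: "\<And>j. k < j \<Longrightarrow> j < n \<Longrightarrow> j \<noteq> w \<Longrightarrow> x j \<in> N"
  obtains y where "elem_equiv scale n x y" "\<And>j. j < n \<Longrightarrow> y j - (if j < Suc k then g j else 0) \<in> N"
proof -
  define c where "c j = (if j < k then - r j else 1 - d)" for j
  define x1 where "x1 = (\<lambda>j. if j \<in> {..k} then x j + c j *s x w else x j)"
  define y where "y = x1(w := x1 w + (-1) *s x1 k)"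
  have "elem_equiv scale n x x1"
    unfolding x1_def by (rule elem_equiv_add_multiples) (use w in auto)
  moreover have "elem_equiv scale n x1 y"
    by (rule elem_equiv_step[of _ _ _ _ k w _ "-1", OF elem_equiv_refl]) (use w in \<open>auto simp: y_def\<close>)
  ultimately have "elem_equiv scale n x y" by (rule elem_equiv_trans)
  have y_k: "y k - g k \<in> N"
  proof -
    have "y k - g k = (x k - d *s g k) + (1 - d) *s (x w - g k)"
      using w by (simp add: y_def x1_def c_def algebra_simps)
    then show ?thesis using at_k at_w N by (simp add: subspace_add subspace_scale)
  qed
  have "y j - (if j < Suc k then g j else 0) \<in> N" if j: "j < n" for j
  proof -
    consider "j < k" | "j = k" | "j = w" | "k < j" "j \<noteq> w" by linarith
    then show ?thesis
    proof cases
      case 1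
      then have "y j - g j = (x j - g j - r j *s g k) - r j *s (x w - g k)"
        using w by (simp add: y_def x1_def c_def algebra_simps)
      also have "\<dots> \<in> N" by (intro subspace_diff[OF N] subspace_scale[OF N] below 1 at_w)
      finally show ?thesis using 1 by simp
    next
      case 3
      then have "y j = (x w - g k) - (y k - g k)"
        using w by (simp add: y_def x1_def algebra_simps)
      also have "\<dots> \<in> N" by (rule subspace_diff[OF N at_w y_k])
      finally show ?thesis using 3 w by simp
    qed (use y_k above[OF _ j] w in \<open>auto simp: y_def x1_def\<close>)
  qed
  with \<open>elem_equiv scale n x y\<close> show thesis by (rule that)
qed

lemma span_lessThan_Suc_Un_subset:
  "span (g ` {..<Suc k} \<union> N) \<subseteq> span (g ` {..<k} \<union> span (insert (g k) N))"
proof (rule span_minimal)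
  have "insert (g k) N \<subseteq> span (insert (g k) N)" by (rule span_superset)
  then show "g ` {..<Suc k} \<union> N \<subseteq> span (g ` {..<k} \<union> span (insert (g k) N))"
    by (auto simp: lessThan_Suc intro: span_base)
qed simp

lemma elem_equiv_normal_form_modulo:
  assumes QE: "quasi_euclidean TYPE('a)" and "k < n" "subspace N"
    and "span (g ` {..<k} \<union> N) = UNIV" "span (m ` {..<n} \<union> N) = UNIV"
  shows "\<exists>m'. elem_equiv scale n m m' \<and> (\<forall>j<n. m' j - (if j < k then g j else 0) \<in> N)"
  using assms(2-5)
proof (induction k arbitrary: N m)
  case 0
  then have "N = UNIV" using span_eq_iff[of N] by simp
  then show ?case using elem_equiv_refl by auto
next
  case (Suc k)
  note N = \<open>subspace N\<close>
  then have span_N: "span N = N" by simp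
  define N' where "N' = span (insert (g k) N)"
  have NN': "N \<subseteq> N'" unfolding N'_def using span_superset by blast
  have "span (g ` {..<k} \<union> N') = UNIV"
    using Suc.prems(3) span_lessThan_Suc_Un_subset[of g k N] unfolding N'_def by auto
  moreover have "span (m ` {..<n} \<union> N') = UNIV"
    using Suc.prems(4) span_mono[of "m ` {..<n} \<union> N" "m ` {..<n} \<union> N'"] NN' by auto
  ultimately obtain m1 where m1: "elem_equiv scale n m m1"
    "\<And>j. j < n \<Longrightarrow> m1 j - (if j < k then g j else 0) \<in> N'"
    using Suc.IH[of N' m] Suc.prems(1) unfolding N'_def by auto
  have "\<exists>c. m1 j - (if j < k then g j else 0) - c *s g k \<in> N" if "j < n" for j
    using m1(2)[OF that] unfolding N'_def span_breakdown_eq span_N .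
  then obtain r where r: "\<And>j. j < n \<Longrightarrow> m1 j - (if j < k then g j else 0) - r j *s g k \<in> N"
    by metis
  have "k + 2 \<le> n" using Suc.prems(1) by simp
  moreover have "m1 j - r j *s g k \<in> N" if "k \<le> j" "j < n" for j
    using r[OF that(2)] that(1) by simp
  ultimately obtain m2 d where m2: "elem_equiv scale n m1 m2" "\<And>j. j < k \<Longrightarrow> m2 j = m1 j"
    "\<And>j. k \<le> j \<Longrightarrow> j < n \<Longrightarrow> m2 j - (if j = k then d else 0) *s g k \<in> N"
    using quasi_euclidean_clear_tail[OF QE N] by blast
  have mm2: "elem_equiv scale n m m2" using elem_equiv_trans[OF m1(1) m2(1)] .
  obtain m3 where m3: "elem_equiv scale n m2 m3" "m3 (Suc k) - g k \<in> N"
    "\<And>j. j \<noteq> Suc k \<Longrightarrow> m3 j = m2 j"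
    using elem_equiv_fill_slot[OF N elem_equiv_preserves_spanning[OF mm2 Suc.prems(4)],
        of "Suc k" "g k"] m2(3)[of "Suc k"] Suc.prems(1) by auto
  have below: "m3 j - g j - r j *s g k \<in> N" if "j < k" for j
    using that m3(3)[of j] m2(2)[OF that] r[of j] Suc.prems(1) by simp
  have at_k: "m3 k - d *s g k \<in> N"
    using m3(3)[of k] m2(3)[of k] Suc.prems(1) by simp
  have above: "m3 j \<in> N" if "k < j" "j < n" "j \<noteq> Suc k" for j
    using m3(3)[OF that(3)] m2(3)[of j] that by simp
  obtain m4 where "elem_equiv scale n m3 m4"
    "\<And>j. j < n \<Longrightarrow> m4 j - (if j < Suc k then g j else 0) \<in> N"
    using elem_equiv_clear_by_pivot[OF N lessI _ below at_k m3(2) above] Suc.prems(1) by blast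
  then show ?case using elem_equiv_trans[OF elem_equiv_trans[OF mm2 m3(1)]] by blast
qed

lemma elem_equiv_normal_form:
  assumes "quasi_euclidean TYPE('a)" "k < n" "span (g ` {..<k}) = UNIV" "span (m ` {..<n}) = UNIV"
  shows "elem_equiv scale n m (\<lambda>j. if j < k then g j else 0)"
proof -
  have "span (S \<union> {0}) = UNIV" if "span S = UNIV" for S
    using span_mono[of S "S \<union> {0}"] that by auto
  then obtain m' where "elem_equiv scale n m m'" "\<forall>j<n. m' j - (if j < k then g j else 0) \<in> {0}"
    using elem_equiv_normal_form_modulo[OF assms(1,2) subspace_single_0, of g m] assms(3,4) by blast
  then show ?thesis by (auto intro: elem_equiv_cong_right)
qed

lemma module_rank_generators:
  assumes "fin_gen_module scale"
  obtains g where "span (g ` {..<module_rank scale}) = UNIV"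
proof -
  have "\<exists>k S. finite S \<and> card S = k \<and> span S = UNIV"
    using assms unfolding fin_gen_module_def by blast
  then have "\<exists>S. finite S \<and> card S = module_rank scale \<and> span S = UNIV"
    unfolding module_rank_def by (rule LeastI_ex)
  then obtain S where S: "finite S" "card S = module_rank scale" "span S = UNIV" by blast
  obtain g where "bij_betw g {0..<card S} S" using ex_bij_betw_nat_finite[OF S(1)] by blast
  then have "g ` {..<module_rank scale} = S" using S(2) by (simp add: bij_betw_def atLeast0LessThan)
  with S(3) show thesis by (intro that[of g]) simp
qed

end

theorem corollaryB:
  fixes scale :: "'r::comm_ring_1 \<Rightarrow> 'm::ab_group_add \<Rightarrow> 'm"
    and n :: nat
  assumes "module scale"
    and "noetherian_ring TYPE('r)"
    and "quasi_euclidean TYPE('r)"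
    and "fin_gen_module scale"
    and "n > module_rank scale"
  shows "\<forall>m \<in> Um scale n. \<forall>m' \<in> Um scale n. \<exists>E \<in> E_group n.
           \<forall>j<n. mod_vec_mat scale n m E j = m' j"
proof (intro ballI)
  interpret module scale by (rule assms(1))
  fix m m' assume "m \<in> Um scale n" "m' \<in> Um scale n"
  obtain g where g: "span (g ` {..<module_rank scale}) = UNIV"
    using module_rank_generators[OF assms(4)] .
  let ?nf = "\<lambda>j. if j < module_rank scale then g j else 0"
  have "elem_equiv scale n m ?nf" "elem_equiv scale n m' ?nf"
    using elem_equiv_normal_form[OF assms(3,5) g] \<open>m \<in> _\<close> \<open>m' \<in> _\<close> unfolding Um_def by auto
  then have "elem_equiv scale n m m'" using elem_equiv_trans elem_equiv_sym by blast
  then show "\<exists>E \<in> E_group n. \<forall>j<n. mod_vec_mat scale n m E j = m' j"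
    by (rule elem_equiv_imp_E_group)
qed

end
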